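(* Let $\mathcal{M}^c=\langle\mathcal{W},\mathcal{N},\mathcal{V}\rangle$ be the canonical model for $\mathbb{PCL}$ defined in the context. For every formula $F$, every maximal consistent set $X$ and every formula $A\in X$: $F\in X$ if and only if $\mathcal{M}^c,(X,A)\Vdash F$.
   Context: Formulas $\mathcal{L}::=p\mid\bot\mid A\wedge B\mid A\lor B\mid A\to B\mid A>B$. Derivability $\vdash$ is in the axiom system of $\mathbb{PCL}$: classical propositional logic, rules (RCEA) from $A\leftrightarrow B$ infer $(A>C)\leftrightarrow(B>C)$, (RCK) from $A\to B$ infer $(C>A)\to(C>B)$, axioms (ID) $A>A$, (R-And) $(A>B)\wedge(A>C)\to(A>(B\wedge C))$, (CM) $(A>B)\wedge(A>C)\to((A\wedge B)>C)$, (OR) $(A>C)\wedge(B>C)\to((A\lor B)>C)$. A set $S$ is inconsistent if $\vdash(B_1\wedge\dots\wedge B_n)\to\bot$ for some $B_i\in S$; maximal consistent sets are consistent sets with no consistent proper superset. For a maximal consistent set $X$: $X^B=\{C\mid B>C\in X\}$; $A\le_X B$ iff $(A\lor B)>A\in X$. Canonical model: $\mathcal{W}=\{(X,A)\mid X$ maximal consistent, $A\in X\}$; $\mathcal{V}(p)=\{(X,A)\in\mathcal{W}\mid p\in X\}$; for $(X,A),(Y,B)\in\mathcal{W}$, $S_X(Y,B)=\{(Z,C)\in\mathcal{W}\mid X^C\subseteq Z,\ C\le_X B,\ B\notin Z\}\cup\{(Y,B)\}$; $\mathcal{N}(X,A)=\{S_X(Y,B)\mid (Y,B)\in\mathcal{W},\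 X^B\subseteq Y\}$. Forcing in a neighbourhood model $\langle W,N,V\rangle$: atoms via $V$, Boolean connectives classical, and $x\Vdash G>H$ iff for all $\alpha\in N(x)$, if some $y\in\alpha$ forces $G$, then there is $\beta\in N(x)$ with $\beta\subseteq\alpha$ such that some $y\in\beta$ forces $G$ and all $y\in\beta$ force $G\to H$. *)

theory Defs
  imports Main
begin

datatype 'a fm =
    Atom 'a
  | Bot
  | And "'a fm" "'a fm"
  | Or "'a fm" "'a fm"
  | Imp "'a fm" "'a fm"
  | Cond "'a fm" "'a fm"   (* A > B *)

definition Iff :: "'a fm \<Rightarrow> 'a fm \<Rightarrow> 'a fm" where
  "Iff A B = And (Imp A B) (Imp B A)"

text \<open>A formula is a (substitution instance of a) propositional tautology iff it is true
under every Boolean valuation that treats atoms and conditionals A > B as propositional letters.\<close>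

fun peval :: "('a fm \<Rightarrow> bool) \<Rightarrow> 'a fm \<Rightarrow> bool" where
  "peval v (Atom p) = v (Atom p)"
| "peval v Bot = False"
| "peval v (And A B) = (peval v A \<and> peval v B)"
| "peval v (Or A B) = (peval v A \<or> peval v B)"
| "peval v (Imp A B) = (peval v A \<longrightarrow> peval v B)"
| "peval v (Cond A B) = v (Cond A B)"

definition tautology :: "'a fm \<Rightarrow> bool" where
  "tautology A \<longleftrightarrow> (\<forall>v. peval v A)"

inductive derivable :: "'a fm \<Rightarrow> bool" where
  TAUT: "tautology A \<Longrightarrow> derivable A"
| MP: "derivable (Imp A B) \<Longrightarrow> derivable A \<Longrightarrow> derivable B"
| RCEA: "derivable (Iff A B) \<Longrightarrow> derivable (Iff (Cond A C) (Cond B C))"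
| RCK: "derivable (Imp A B) \<Longrightarrow> derivable (Imp (Cond C A) (Cond C B))"
| ID: "derivable (Cond A A)"
| RAnd: "derivable (Imp (And (Cond A B) (Cond A C)) (Cond A (And B C)))"
| CM: "derivable (Imp (And (Cond A B) (Cond A C)) (Cond (And A B) C))"
| OR: "derivable (Imp (And (Cond A C) (Cond B C)) (Cond (Or A B) C))"

fun conjs :: "'a fm list \<Rightarrow> 'a fm" where
  "conjs [] = Imp Bot Bot"
| "conjs [B] = B"
| "conjs (B # Bs) = And B (conjs Bs)"

definition inconsistent :: "'a fm set \<Rightarrow> bool" where
  "inconsistent S \<longleftrightarrow> (\<exists>Bs. Bs \<noteq> [] \<and> set Bs \<subseteq> S \<and> derivable (Imp (conjs Bs) Bot))"

definition consistent :: "'a fm set \<Rightarrow> bool" where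
  "consistent S \<longleftrightarrow> \<not> inconsistent S"

definition maxcons :: "'a fm set \<Rightarrow> bool" where
  "maxcons X \<longleftrightarrow> consistent X \<and> (\<forall>Y. X \<subset> Y \<longrightarrow> \<not> consistent Y)"

definition condset :: "'a fm set \<Rightarrow> 'a fm \<Rightarrow> 'a fm set" where
  "condset X B = {C. Cond B C \<in> X}"   (* X^B *)

definition cle :: "'a fm set \<Rightarrow> 'a fm \<Rightarrow> 'a fm \<Rightarrow> bool" where
  "cle X A B \<longleftrightarrow> Cond (Or A B) A \<in> X"

fun forces :: "('w \<Rightarrow> 'w set set) \<Rightarrow> ('a \<Rightarrow> 'w set) \<Rightarrow> 'w \<Rightarrow> 'a fm \<Rightarrow> bool" where
  "forces N V x (Atom p) = (x \<in> V p)"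
| "forces N V x Bot = False"
| "forces N V x (And A B) = (forces N V x A \<and> forces N V x B)"
| "forces N V x (Or A B) = (forces N V x A \<or> forces N V x B)"
| "forces N V x (Imp A B) = (forces N V x A \<longrightarrow> forces N V x B)"
| "forces N V x (Cond G H) =
     (\<forall>\<alpha>\<in>N x. (\<exists>y\<in>\<alpha>. forces N V y G) \<longrightarrow>
        (\<exists>\<beta>\<in>N x. \<beta> \<subseteq> \<alpha> \<and> (\<exists>y\<in>\<beta>. forces N V y G) \<and> (\<forall>y\<in>\<beta>. forces N V y G \<longrightarrow> forces N V y H)))"

definition canW :: "('a fm set \<times> 'a fm) set" where
  "canW = {(X, A). maxcons X \<and> A \<in> X}"

definition canV :: "'a \<Rightarrow> ('a fm set \<times> 'a fm) set" where
  "canV p = {(X, A) \<in> canW. Atom p \<in> X}"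

definition canS :: "'a fm set \<Rightarrow> ('a fm set \<times> 'a fm) \<Rightarrow> ('a fm set \<times> 'a fm) set" where
  "canS X w = (case w of (Y, B) \<Rightarrow>
     {(Z, C) \<in> canW. condset X C \<subseteq> Z \<and> cle X C B \<and> B \<notin> Z} \<union> {(Y, B)})"

definition canN :: "('a fm set \<times> 'a fm) \<Rightarrow> ('a fm set \<times> 'a fm) set set" where
  "canN w = (case w of (X, A) \<Rightarrow>
     {canS X (Y, B) | Y B. (Y, B) \<in> canW \<and> condset X B \<subseteq> Y})"

end

(* For G > H \<notin> X, a maximal consistent Y \<supseteq> X^G \<union> {\<not>H} gives the
   neighbourhood S_X(Y, G), whose only G-world is (Y, G), and H fails there. For G > H \<in> X
   and a neighbourhood S_X(Y, B) meeting G: if (G \<or> B) > (G \<rightarrow> B) \<in> X, every G-world of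
   S_X(Y, B) already satisfies H; otherwise a maximal consistent Y' \<supseteq> X^(G \<or> B) \<union> {\<not>(G \<rightarrow> B)}
   yields the refinement S_X(Y', G \<or> B), whose only G-world is (Y', G \<or> B), where H holds. *)

theory Submission
  imports Defs
begin

lemma peval_conjs: "peval v (conjs Bs) \<longleftrightarrow> (\<forall>B\<in>set Bs. peval v B)"
  by (induction Bs rule: conjs.induct) auto

lemma derivable_by_tautology:
  assumes "\<forall>P\<in>set Ps. derivable P" and "\<And>v. \<forall>P\<in>set Ps. peval v P \<Longrightarrow> peval v Q"
  shows "derivable Q"
  using assms
proof (induction Ps arbitrary: Q)
  case Nil
  then show ?case by (auto simp: tautology_def intro: derivable.TAUT)
next
  case (Cons P Ps)
  have "derivable (Imp P Q)" using Cons.prems by (intro Cons.IH) auto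
  then show ?case using Cons.prems by (auto intro: derivable.MP)
qed

lemma lindenbaum:
  assumes "consistent S"
  obtains M where "S \<subseteq> M" and "maxcons M"
proof -
  let ?E = "{Y. S \<subseteq> Y \<and> consistent Y}"
  have "\<exists>M\<in>?E. \<forall>Y\<in>?E. M \<subseteq> Y \<longrightarrow> Y = M"
  proof (rule subset_Zorn_nonempty)
    show "?E \<noteq> {}" using assms by auto
  next
    fix C assume C: "C \<noteq> {}" "subset.chain ?E C"
    obtain Y0 where "Y0 \<in> C" using C(1) by blast
    then have "S \<subseteq> \<Union>C" using C(2) by (auto simp: subset.chain_def)
    moreover have "\<not> inconsistent (\<Union>C)"
    proof
      assume "inconsistent (\<Union>C)"
      then obtain Bs where Bs: "Bs \<noteq> []" "set Bs \<subseteq> \<Union>C" "derivable (Imp (conjs Bs) Bot)"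
        by (auto simp: inconsistent_def)
      obtain Y where "Y \<in> C" "set Bs \<subseteq> Y"
        using finite_subset_Union_chain[OF _ Bs(2) C] by blast
      moreover have "consistent Y" using \<open>Y \<in> C\<close> C(2) by (auto simp: subset.chain_def)
      ultimately show False using Bs by (auto simp: consistent_def inconsistent_def)
    qed
    ultimately show "\<Union>C \<in> ?E" by (simp add: consistent_def)
  qed
  then obtain M where M: "S \<subseteq> M" "consistent M"
    "\<forall>Y. S \<subseteq> Y \<and> consistent Y \<longrightarrow> M \<subseteq> Y \<longrightarrow> Y = M"
    by auto
  then have "maxcons M" unfolding maxcons_def by blast
  with M(1) show thesis by (rule that)
qed

text \<open>Nonemptiness is not automatic: if \<open>Bot\<close> were derivable, the empty set would be
  maximal consistent.\<close>

locale mcs =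
  fixes X :: "'a fm set"
  assumes maxcons: "maxcons X" and nonempty: "X \<noteq> {}"
begin

lemma not_inconsistent: "\<not> inconsistent X"
  using maxcons by (simp add: maxcons_def consistent_def)

lemma inconsistent_insert: "C \<notin> X \<Longrightarrow> inconsistent (insert C X)"
  using maxcons by (auto simp: maxcons_def consistent_def)

lemma mem_closed:
  assumes "set Bs \<subseteq> X" and "derivable (Imp (conjs Bs) C)"
  shows "C \<in> X"
proof (rule ccontr)
  assume "C \<notin> X"
  then obtain Cs where Cs: "set Cs \<subseteq> insert C X" "derivable (Imp (conjs Cs) Bot)"
    using inconsistent_insert by (auto simp: inconsistent_def)
  obtain a where "a \<in> X" using nonempty by blast
  \<comment> \<open>\<open>a\<close> keeps the list nonempty, as the definition of inconsistency requires\<close>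
  define Es where "Es = a # Bs @ filter (\<lambda>x. x \<noteq> C) Cs"
  have "derivable (Imp (conjs Es) Bot)"
    using assms(2) Cs(2)
    by (intro derivable_by_tautology[of "[Imp (conjs Bs) C, Imp (conjs Cs) Bot]"])
      (auto simp: peval_conjs Es_def)
  moreover have "set Es \<subseteq> X" using \<open>a \<in> X\<close> assms(1) Cs(1) by (auto simp: Es_def)
  ultimately have "inconsistent X"
    unfolding inconsistent_def by (intro exI[of _ Es]) (simp add: Es_def)
  then show False using not_inconsistent by blast
qed

lemma mem_mp: "derivable (Imp P Q) \<Longrightarrow> P \<in> X \<Longrightarrow> Q \<in> X"
  using mem_closed[of "[P]"] by simp

lemma mem_derivable:
  assumes "derivable P"
  shows "P \<in> X"
proof -
  obtain a where "a \<in> X" using nonempty by blast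
  moreover have "derivable (Imp a P)"
    using assms by (intro derivable_by_tautology[of "[P]"]) auto
  ultimately show ?thesis using mem_mp by blast
qed

lemma mem_taut:
  assumes "set Bs \<subseteq> X" and "\<And>v. \<forall>B\<in>set Bs. peval v B \<Longrightarrow> peval v C"
  shows "C \<in> X"
  using assms by (intro mem_closed derivable.TAUT) (auto simp: tautology_def peval_conjs)

lemma Bot_not_mem: "Bot \<notin> X"
proof
  assume "Bot \<in> X"
  moreover have "derivable (Imp (conjs [Bot]) Bot)"
    by (rule derivable.TAUT) (simp add: tautology_def)
  ultimately have "inconsistent X"
    unfolding inconsistent_def by (intro exI[of _ "[Bot]"]) simp
  then show False using not_inconsistent by blast
qed

lemma neg_mem_iff: "Imp A Bot \<in> X \<longleftrightarrow> A \<notin> X"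
proof
  assume "Imp A Bot \<in> X"
  then show "A \<notin> X" using Bot_not_mem mem_taut[of "[Imp A Bot, A]" Bot] by auto
next
  assume "A \<notin> X"
  then obtain Cs where Cs: "set Cs \<subseteq> insert A X" "derivable (Imp (conjs Cs) Bot)"
    using inconsistent_insert by (auto simp: inconsistent_def)
  obtain a where "a \<in> X" using nonempty by blast
  define Bs where "Bs = a # filter (\<lambda>x. x \<noteq> A) Cs"
  have "derivable (Imp (conjs Bs) (Imp A Bot))"
    using Cs(2)
    by (intro derivable_by_tautology[of "[Imp (conjs Cs) Bot]"]) (auto simp: peval_conjs Bs_def)
  moreover have "set Bs \<subseteq> X" using \<open>a \<in> X\<close> Cs(1) by (auto simp: Bs_def)
  ultimately show "Imp A Bot \<in> X" using mem_closed by blast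
qed

lemma And_mem_iff: "And A B \<in> X \<longleftrightarrow> A \<in> X \<and> B \<in> X"
proof
  assume "And A B \<in> X"
  then show "A \<in> X \<and> B \<in> X"
    using mem_taut[of "[And A B]" A] mem_taut[of "[And A B]" B] by auto
next
  assume "A \<in> X \<and> B \<in> X"
  then show "And A B \<in> X" using mem_taut[of "[A, B]" "And A B"] by auto
qed

lemma Or_mem_iff: "Or A B \<in> X \<longleftrightarrow> A \<in> X \<or> B \<in> X"
proof
  assume "Or A B \<in> X"
  moreover have "\<not> set [Or A B, Imp A Bot, Imp B Bot] \<subseteq> X"
    using mem_taut[of "[Or A B, Imp A Bot, Imp B Bot]" Bot] Bot_not_mem by auto
  ultimately show "A \<in> X \<or> B \<in> X" using neg_mem_iff by auto
next
  assume "A \<in> X \<or> B \<in> X"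
  then show "Or A B \<in> X" using mem_taut[of "[A]" "Or A B"] mem_taut[of "[B]" "Or A B"] by auto
qed

lemma Imp_mem_iff: "Imp A B \<in> X \<longleftrightarrow> (A \<in> X \<longrightarrow> B \<in> X)"
proof
  assume "Imp A B \<in> X"
  then show "A \<in> X \<longrightarrow> B \<in> X" using mem_taut[of "[Imp A B, A]" B] by auto
next
  assume "A \<in> X \<longrightarrow> B \<in> X"
  moreover have "Imp A B \<in> X" if "Imp A Bot \<in> X"
    using that mem_taut[of "[Imp A Bot]" "Imp A B"] by auto
  moreover have "Imp A B \<in> X" if "B \<in> X"
    using that mem_taut[of "[B]" "Imp A B"] by auto
  ultimately show "Imp A B \<in> X" using neg_mem_iff by blast
qed

lemma RCK_mem: "derivable (Imp A B) \<Longrightarrow> Cond C A \<in> X \<Longrightarrow> Cond C B \<in> X"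
  by (rule mem_mp[OF derivable.RCK])

lemma RCEA_mem:
  assumes "derivable (Iff A B)" and "Cond A C \<in> X"
  shows "Cond B C \<in> X"
proof -
  have "derivable (Imp (Cond A C) (Cond B C))"
    using derivable.RCEA[OF assms(1), of C]
    by (intro derivable_by_tautology[of "[Iff (Cond A C) (Cond B C)]"]) (auto simp: Iff_def)
  then show ?thesis using assms(2) by (rule mem_mp)
qed

lemma ID_mem: "Cond A A \<in> X"
  by (rule mem_derivable[OF derivable.ID])

lemma RAnd_mem: "Cond A B \<in> X \<Longrightarrow> Cond A C \<in> X \<Longrightarrow> Cond A (And B C) \<in> X"
  using mem_mp[OF derivable.RAnd] And_mem_iff by blast

lemma CM_mem: "Cond A B \<in> X \<Longrightarrow> Cond A C \<in> X \<Longrightarrow> Cond (And A B) C \<in> X"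
  using mem_mp[OF derivable.CM] And_mem_iff by blast

lemma OR_mem: "Cond A C \<in> X \<Longrightarrow> Cond B C \<in> X \<Longrightarrow> Cond (Or A B) C \<in> X"
  using mem_mp[OF derivable.OR] And_mem_iff by blast

lemma Cond_conjs_mem: "\<forall>C\<in>set Cs. Cond D C \<in> X \<Longrightarrow> Cond D (conjs Cs) \<in> X"
proof (induction Cs rule: conjs.induct)
  case 1
  show ?case by (rule RCK_mem[OF derivable.TAUT ID_mem]) (simp add: tautology_def)
next
  case (2 B)
  then show ?case by simp
next
  case (3 B C Cs)
  then show ?case using RAnd_mem by simp
qed

lemma Cond_Or_Imp_mem:
  assumes "Cond G H \<in> X"
  shows "Cond (Or G B) (Imp G H) \<in> X"
proof -
  have "Cond G (Imp G H) \<in> X"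
    by (rule RCK_mem[OF derivable.TAUT assms]) (simp add: tautology_def)
  moreover have "Cond (And B (Imp G Bot)) (Imp G H) \<in> X"
    by (rule RCK_mem[OF derivable.TAUT ID_mem]) (simp add: tautology_def)
  ultimately have "Cond (Or G (And B (Imp G Bot))) (Imp G H) \<in> X"
    by (rule OR_mem)
  then show ?thesis
    by (rule RCEA_mem[OF derivable.TAUT, rotated]) (auto simp: tautology_def Iff_def)
qed

lemma Cond_Imp_mem_of_Or_Imp:
  assumes "Cond G H \<in> X" and "Cond (Or G B) (Imp G B) \<in> X"
  shows "Cond B (Imp G H) \<in> X"
proof -
  have "Cond (Or G B) (And (Imp G B) (Or G B)) \<in> X"
    using assms(2) ID_mem by (rule RAnd_mem)
  then have "Cond (Or G B) B \<in> X"
    by (rule RCK_mem[OF derivable.TAUT, rotated]) (auto simp: tautology_def)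
  then have "Cond (And (Or G B) B) (Imp G H) \<in> X"
    using Cond_Or_Imp_mem[OF assms(1)] by (rule CM_mem)
  then show ?thesis
    by (rule RCEA_mem[OF derivable.TAUT, rotated]) (auto simp: tautology_def Iff_def)
qed

lemma Cond_Imp_mem_of_cle:
  assumes "Cond (Or G B) (Imp G B) \<in> X" and "cle X E B"
  shows "Cond E (Imp G B) \<in> X"
proof -
  have "Cond (And E (And (Imp G Bot) (Imp B Bot))) (Imp G B) \<in> X"
    by (rule RCK_mem[OF derivable.TAUT ID_mem]) (auto simp: tautology_def)
  with assms(1) have "Cond (Or (Or G B) (And E (And (Imp G Bot) (Imp B Bot)))) (Imp G B) \<in> X"
    by (rule OR_mem)
  then have EBG: "Cond (Or (Or E B) G) (Imp G B) \<in> X"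
    by (rule RCEA_mem[OF derivable.TAUT, rotated]) (auto simp: tautology_def Iff_def)
  have "Cond (Or (Or E B) G) (And (Or (Or E B) G) (Imp G B)) \<in> X"
    using ID_mem EBG by (rule RAnd_mem)
  then have "Cond (Or (Or E B) G) (Or E B) \<in> X"
    by (rule RCK_mem[OF derivable.TAUT, rotated]) (auto simp: tautology_def)
  then have "Cond (And (Or (Or E B) G) (Or E B)) (Imp G B) \<in> X"
    using EBG by (rule CM_mem)
  then have "Cond (Or E B) (Imp G B) \<in> X"
    by (rule RCEA_mem[OF derivable.TAUT, rotated]) (auto simp: tautology_def Iff_def)
  with assms(2) have "Cond (And (Or E B) E) (Imp G B) \<in> X"
    unfolding cle_def by (rule CM_mem)
  then show ?thesis
    by (rule RCEA_mem[OF derivable.TAUT, rotated]) (auto simp: tautology_def Iff_def)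
qed

lemma cle_Or_left: "cle X (Or G B) B"
  unfolding cle_def
  by (rule RCEA_mem[OF derivable.TAUT ID_mem]) (auto simp: tautology_def Iff_def)

lemma cle_Or_rightD:
  assumes "cle X E (Or G B)"
  shows "cle X E B"
proof -
  have "Cond (Or E (Or G B)) E \<in> X" using assms by (simp add: cle_def)
  moreover from this have "Cond (Or E (Or G B)) (Or E B) \<in> X"
    by (rule RCK_mem[OF derivable.TAUT, rotated]) (simp add: tautology_def)
  ultimately have "Cond (And (Or E (Or G B)) (Or E B)) E \<in> X"
    by (intro CM_mem)
  then show ?thesis unfolding cle_def
    by (rule RCEA_mem[OF derivable.TAUT, rotated]) (auto simp: tautology_def Iff_def)
qed

lemma consistent_condset_neg:
  assumes "Cond D K \<notin> X"
  shows "consistent (insert (Imp K Bot) (condset X D))"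
  unfolding consistent_def inconsistent_def
proof
  assume "\<exists>Bs. Bs \<noteq> [] \<and> set Bs \<subseteq> insert (Imp K Bot) (condset X D) \<and> derivable (Imp (conjs Bs) Bot)"
  then obtain Bs where Bs: "set Bs \<subseteq> insert (Imp K Bot) (condset X D)" "derivable (Imp (conjs Bs) Bot)"
    by blast
  define Cs where "Cs = filter (\<lambda>C. C \<noteq> Imp K Bot) Bs"
  have "derivable (Imp (conjs Cs) K)"
    using Bs(2)
    by (intro derivable_by_tautology[of "[Imp (conjs Bs) Bot]"]) (auto simp: peval_conjs Cs_def)
  moreover have "Cond D (conjs Cs) \<in> X"
    using Bs(1) by (intro Cond_conjs_mem) (auto simp: Cs_def condset_def)
  ultimately have "Cond D K \<in> X" by (rule RCK_mem)
  with assms show False by contradiction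
qed

lemma obtain_mcs_condset:
  assumes "Cond D K \<notin> X"
  obtains Y where "mcs Y" and "condset X D \<subseteq> Y" and "K \<notin> Y"
proof -
  obtain Y where Y: "insert (Imp K Bot) (condset X D) \<subseteq> Y" "maxcons Y"
    using lindenbaum[OF consistent_condset_neg[OF assms]] by blast
  then have "mcs Y" by unfold_locales auto
  moreover from this Y(1) have "K \<notin> Y" using mcs.neg_mem_iff by blast
  ultimately show thesis using Y(1) that by blast
qed

end

lemma mcs_if_canW: "(X, A) \<in> canW \<Longrightarrow> mcs X"
  by unfold_locales (auto simp: canW_def)

lemma canS_iff:
  "(W, E) \<in> canS X (Y, B) \<longleftrightarrow>
     (W, E) = (Y, B) \<or> (W, E) \<in> canW \<and> condset X E \<subseteq> W \<and> cle X E B \<and> B \<notin> W"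
  by (auto simp: canS_def)

lemma canN_iff:
  "\<alpha> \<in> canN (X, A) \<longleftrightarrow> (\<exists>Y B. \<alpha> = canS X (Y, B) \<and> (Y, B) \<in> canW \<and> condset X B \<subseteq> Y)"
  by (auto simp: canN_def)

lemma canN_subset_canW: "\<alpha> \<in> canN w \<Longrightarrow> \<alpha> \<subseteq> canW"
  by (cases w) (auto simp: canN_def canS_def)

context mcs
begin

lemma canS_Or_subset:
  assumes "(Y', Or G B) \<in> canW" and "condset X (Or G B) \<subseteq> Y'" and "B \<notin> Y'"
  shows "canS X (Y', Or G B) \<subseteq> canS X (Y, B)"
proof
  fix w assume "w \<in> canS X (Y', Or G B)"
  moreover obtain W E where w: "w = (W, E)" by (cases w)
  ultimately consider "(W, E) = (Y', Or G B)"
    | "(W, E) \<in> canW" "condset X E \<subseteq> W" "cle X E (Or G B)" "Or G B \<notin> W"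
    by (auto simp: canS_iff)
  then show "w \<in> canS X (Y, B)"
  proof cases
    case 1
    then show ?thesis using assms cle_Or_left by (auto simp: w canS_iff)
  next
    case 2
    then have "B \<notin> W" using mcs.Or_mem_iff[OF mcs_if_canW] by blast
    then show ?thesis using 2 cle_Or_rightD by (auto simp: w canS_iff)
  qed
qed

lemma canS_refines_if_Or_Imp_mem:
  assumes "Cond G H \<in> X" and "Cond (Or G B) (Imp G B) \<in> X"
    and "(Y, B) \<in> canW" and "condset X B \<subseteq> Y" and "w \<in> canS X (Y, B)" and "G \<in> fst w"
  shows "H \<in> fst w"
proof -
  obtain W E where w: "w = (W, E)" by (cases w)
  from assms(5) consider "(W, E) = (Y, B)"
    | "(W, E) \<in> canW" "condset X E \<subseteq> W" "cle X E B" "B \<notin> W"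
    by (auto simp: w canS_iff)
  then show ?thesis
  proof cases
    case 1
    have "Cond B (Imp G H) \<in> X" using assms(1,2) by (rule Cond_Imp_mem_of_Or_Imp)
    then have "Imp G H \<in> Y" using assms(4) by (auto simp: condset_def)
    then show ?thesis using 1 assms(3,6) mcs.Imp_mem_iff[OF mcs_if_canW] by (auto simp: w)
  next
    case 2
    have "Cond E (Imp G B) \<in> X" using assms(2) 2(3) by (rule Cond_Imp_mem_of_cle)
    then have "Imp G B \<in> W" using 2(2) by (auto simp: condset_def)
    then show ?thesis using 2(1,4) assms(6) mcs.Imp_mem_iff[OF mcs_if_canW] by (auto simp: w)
  qed
qed

lemma canN_refines_if_Cond_mem:
  assumes GH: "Cond G H \<in> X" and \<alpha>: "\<alpha> \<in> canN (X, A)" and G: "\<exists>w\<in>\<alpha>. G \<in> fst w"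
  shows "\<exists>\<beta>\<in>canN (X, A). \<beta> \<subseteq> \<alpha> \<and> (\<exists>w\<in>\<beta>. G \<in> fst w) \<and> (\<forall>w\<in>\<beta>. G \<in> fst w \<longrightarrow> H \<in> fst w)"
proof -
  obtain Y B where \<alpha>_eq: "\<alpha> = canS X (Y, B)" and YB: "(Y, B) \<in> canW" "condset X B \<subseteq> Y"
    using \<alpha> by (auto simp: canN_iff)
  show ?thesis
  proof (cases "Cond (Or G B) (Imp G B) \<in> X")
    case True
    have "\<forall>w\<in>\<alpha>. G \<in> fst w \<longrightarrow> H \<in> fst w"
      using canS_refines_if_Or_Imp_mem[OF GH True YB] by (simp add: \<alpha>_eq)
    then show ?thesis using \<alpha> G by blast
  next
    case False
    then obtain Y' where Y': "mcs Y'" "condset X (Or G B) \<subseteq> Y'" "Imp G B \<notin> Y'"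
      by (rule obtain_mcs_condset)
    then have "G \<in> Y'" "B \<notin> Y'" using mcs.Imp_mem_iff[OF Y'(1)] by blast+
    then have Y'W: "(Y', Or G B) \<in> canW"
      using mcs.Or_mem_iff[OF Y'(1)] mcs.maxcons[OF Y'(1)] by (simp add: canW_def)
    have "Imp G H \<in> Y'" using Cond_Or_Imp_mem[OF GH] Y'(2) by (auto simp: condset_def)
    then have "H \<in> Y'" using mcs.Imp_mem_iff[OF Y'(1)] \<open>G \<in> Y'\<close> by blast
    define \<beta> where "\<beta> = canS X (Y', Or G B)"
    have "\<beta> \<in> canN (X, A)" using Y'W Y'(2) by (auto simp: \<beta>_def canN_iff)
    moreover have "\<beta> \<subseteq> \<alpha>"
      unfolding \<beta>_def \<alpha>_eq using Y'W Y'(2) \<open>B \<notin> Y'\<close> by (rule canS_Or_subset)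
    moreover have "\<exists>w\<in>\<beta>. G \<in> fst w"
      using \<open>G \<in> Y'\<close> by (intro bexI[of _ "(Y', Or G B)"]) (simp_all add: \<beta>_def canS_iff)
    moreover have "H \<in> fst w" if "w \<in> \<beta>" "G \<in> fst w" for w
      using that \<open>H \<in> Y'\<close> mcs.Or_mem_iff[OF mcs_if_canW]
      by (cases w) (auto simp: \<beta>_def canS_iff)
    ultimately show ?thesis by blast
  qed
qed

lemma canN_counterexample_if_Cond_not_mem:
  assumes "Cond G H \<notin> X"
  obtains \<alpha> where "\<alpha> \<in> canN (X, A)" and "\<exists>w\<in>\<alpha>. G \<in> fst w"
    and "\<forall>w\<in>\<alpha>. G \<in> fst w \<longrightarrow> H \<notin> fst w"
proof -
  obtain Y where Y: "mcs Y" "condset X G \<subseteq> Y" "H \<notin> Y"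
    using assms by (rule obtain_mcs_condset)
  have "G \<in> Y" using Y(2) ID_mem by (auto simp: condset_def)
  then have YG: "(Y, G) \<in> canW" using mcs.maxcons[OF Y(1)] by (simp add: canW_def)
  show thesis
  proof (rule that)
    show "canS X (Y, G) \<in> canN (X, A)" using YG Y(2) by (auto simp: canN_iff)
    show "\<exists>w\<in>canS X (Y, G). G \<in> fst w"
      using \<open>G \<in> Y\<close> by (intro bexI[of _ "(Y, G)"]) (simp_all add: canS_iff)
    show "\<forall>w\<in>canS X (Y, G). G \<in> fst w \<longrightarrow> H \<notin> fst w"
      using Y(3) by (auto simp: canS_def)
  qed
qed

lemma forces_Cond_iff_mem:
  assumes G: "\<And>W E. (W, E) \<in> canW \<Longrightarrow> forces canN canV (W, E) G \<longleftrightarrow> G \<in> W"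
    and H: "\<And>W E. (W, E) \<in> canW \<Longrightarrow> forces canN canV (W, E) H \<longleftrightarrow> H \<in> W"
  shows "forces canN canV (X, A) (Cond G H) \<longleftrightarrow> Cond G H \<in> X"
proof -
  have G_nbhd: "forces canN canV y G \<longleftrightarrow> G \<in> fst y"
    and H_nbhd: "forces canN canV y H \<longleftrightarrow> H \<in> fst y"
    if "y \<in> \<alpha>" and "\<alpha> \<in> canN (X, A)" for y \<alpha>
    using G H canN_subset_canW[OF that(2)] that(1) by (metis prod.collapse subsetD)+
  show ?thesis
  proof
    assume forces: "forces canN canV (X, A) (Cond G H)"
    show "Cond G H \<in> X"
    proof (rule ccontr)
      assume "Cond G H \<notin> X"
      then obtain \<alpha> where \<alpha>: "\<alpha> \<in> canN (X, A)" "\<exists>y\<in>\<alpha>. G \<in> fst y"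
        "\<forall>y\<in>\<alpha>. G \<in> fst y \<longrightarrow> H \<notin> fst y"
        by (rule canN_counterexample_if_Cond_not_mem)
      then have "\<exists>y\<in>\<alpha>. forces canN canV y G" using G_nbhd by blast
      with forces \<alpha>(1) obtain \<beta> y where "\<beta> \<subseteq> \<alpha>" "y \<in> \<beta>"
        "forces canN canV y G" "forces canN canV y H"
        by (auto simp del: forces.simps(1-5))
      then show False using \<alpha>(1,3) G_nbhd H_nbhd by blast
    qed
  next
    assume "Cond G H \<in> X"
    show "forces canN canV (X, A) (Cond G H)"
      unfolding forces.simps(6)
    proof (intro ballI impI)
      fix \<alpha> assume \<alpha>: "\<alpha> \<in> canN (X, A)" and "\<exists>y\<in>\<alpha>. forces canN canV y G"
      then have "\<exists>y\<in>\<alpha>. G \<in> fst y" using G_nbhd by blast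
      then obtain \<beta> where \<beta>: "\<beta> \<in> canN (X, A)" "\<beta> \<subseteq> \<alpha>"
        "\<exists>y\<in>\<beta>. G \<in> fst y" "\<forall>y\<in>\<beta>. G \<in> fst y \<longrightarrow> H \<in> fst y"
        using canN_refines_if_Cond_mem[OF \<open>Cond G H \<in> X\<close> \<alpha>] by blast
      have "\<exists>y\<in>\<beta>. forces canN canV y G"
        and "\<forall>y\<in>\<beta>. forces canN canV y G \<longrightarrow> forces canN canV y H"
        using \<beta>(3,4) G_nbhd[OF _ \<beta>(1)] H_nbhd[OF _ \<beta>(1)] by blast+
      with \<beta>(1,2) show "\<exists>\<beta>\<in>canN (X, A). \<beta> \<subseteq> \<alpha> \<and> (\<exists>y\<in>\<beta>. forces canN canV y G) \<and>
          (\<forall>y\<in>\<beta>. forces canN canV y G \<longrightarrow> forces canN canV y H)"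
        by blast
    qed
  qed
qed

end

lemma forces_canonical_iff_mem:
  assumes "(X, A) \<in> canW"
  shows "forces canN canV (X, A) F \<longleftrightarrow> F \<in> X"
  using assms
proof (induction F arbitrary: X A)
  case (Atom p)
  then show ?case by (simp add: canV_def)
next
  case Bot
  then show ?case using mcs.Bot_not_mem[OF mcs_if_canW] by simp
next
  case (And F1 F2)
  then show ?case using mcs.And_mem_iff[OF mcs_if_canW[OF And.prems]] by simp
next
  case (Or F1 F2)
  then show ?case using mcs.Or_mem_iff[OF mcs_if_canW[OF Or.prems]] by simp
next
  case (Imp F1 F2)
  then show ?case using mcs.Imp_mem_iff[OF mcs_if_canW[OF Imp.prems]] by simp
next
  case (Cond G H)
  then show ?case using mcs.forces_Cond_iff_mem[OF mcs_if_canW] by blast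
qed

theorem mainTheorem3:
  fixes F A :: "'a fm" and X :: "'a fm set"
  assumes "maxcons X" and "A \<in> X"
  shows "F \<in> X \<longleftrightarrow> forces canN canV (X, A) F"
  using forces_canonical_iff_mem[of X A F] assms by (simp add: canW_def)

end
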